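(* Let $N\cong\mathbb{Z}^3$ and let $P$ be a minimal Fano polytope in $N_\mathbb{R}$ which contains two triangles $T_1,T_2$, whose vertices are vertices of $P$, lying in distinct two-dimensional linear subspaces $L_1\ne L_2$, such that each $T_j$ is equivalent (under an isomorphism of lattices $\mathbb{Z}^2\to N\cap L_j$) to $\mathrm{conv}\{(1,0),(0,1),(-1,-1)\}$. Then, up to the action of $GL(3,\mathbb{Z})$, $P$ is the convex hull of the columns of $$\begin{pmatrix}1&0&0&-1&1\\0&1&0&-1&1\\0&0&-1&0&1\end{pmatrix}.$$
   Context: A Fano polytope is a three-dimensional convex polytope $P\subset N_\mathbb{R}$ with vertices in $N$ such that the origin is the only lattice point in the interior of $P$. It is minimal if, for every vertex $\rho$ of $P$, the polytope $\mathrm{conv}((P\cap N)\setminus\{\rho\})$ is not a Fano polytope. Polytopes are identified up to $GL(3,\mathbb{Z})$ (after choosing a basis of $N$). *)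

theory Defs
  imports "HOL-Analysis.Analysis"
begin

definition lattice_pt :: "real^'n \<Rightarrow> bool" where
  "lattice_pt x \<longleftrightarrow> (\<forall>i. x $ i \<in> \<int>)"

definition fano_polytope :: "(real^3) set \<Rightarrow> bool" where
  "fano_polytope P \<longleftrightarrow>
     polytope P \<and> aff_dim P = 3 \<and>
     (\<forall>v. v extreme_point_of P \<longrightarrow> lattice_pt v) \<and>
     {x \<in> interior P. lattice_pt x} = {0}"

definition minimal_fano :: "(real^3) set \<Rightarrow> bool" where
  "minimal_fano P \<longleftrightarrow> fano_polytope P \<and>
     (\<forall>\<rho>. \<rho> extreme_point_of P \<longrightarrow>
        \<not> fano_polytope (convex hull ({x \<in> P. lattice_pt x} - {\<rho>})))"

definition std_triangle :: "(real^2) set" where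
  "std_triangle = convex hull {vector [1,0], vector [0,1], vector [-1,-1]}"

text \<open>T lies in the 2-dimensional linear subspace L and is the image of the standard
  triangle under (the real extension of) a lattice isomorphism Z^2 \<rightarrow> N \<inter> L.\<close>
definition std_triangle_in :: "(real^3) set \<Rightarrow> (real^3) set \<Rightarrow> bool" where
  "std_triangle_in T L \<longleftrightarrow>
     subspace L \<and> dim L = 2 \<and> T \<subseteq> L \<and>
     (\<exists>f :: real^2 \<Rightarrow> real^3. linear f \<and> inj f \<and> f ` UNIV = L \<and>
        f ` {y. lattice_pt y} = {x \<in> L. lattice_pt x} \<and>
        f ` std_triangle = T)"

definition GL3Z :: "real^3^3 \<Rightarrow> bool" where
  "GL3Z M \<longleftrightarrow> (\<forall>i j. M $ i $ j \<in> \<int>) \<and> \<bar>det M\<bar> = 1"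

definition P_model :: "(real^3) set" where
  "P_model = convex hull {vector [1,0,0], vector [0,1,0], vector [0,0,-1],
                          vector [-1,-1,0], vector [1,1,1]}"

end

(*
  Let a, b, -a-b be the vertices of the first triangle, with a, b a basis of the lattice points
  of its plane, and let h x = (a \<times> b) \<bullet> x be the height above that plane. If two lattice points
  u, v of P lie strictly on opposite sides of the plane, the origin is interior to
  conv {a, b, -a-b, u, v}, so by minimality every vertex of P is one of these five points. The
  heights of the vertices of the second triangle sum to zero, which forces
  P = conv {a, b, -a-b, d, a+b-d} for a vertex d off the plane. Finally a, b, d is a lattice
  basis: otherwise some lattice point has height h d / m with m \<ge> 2, and translating it by the
  lattice of the plane, or reflecting it, puts a lattice point of P at height \<plusminus>h d / m, which
  could replace one apex of the bipyramid, again contradicting minimality. The matrix with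
  columns a, b, -d then maps the model polytope onto P.
*)

theory Submission
  imports Defs
begin

lemma lattice_pt_zero [simp]: "lattice_pt 0"
  by (simp add: lattice_pt_def)

lemma lattice_pt_add: "lattice_pt x \<Longrightarrow> lattice_pt y \<Longrightarrow> lattice_pt (x + y)"
  by (simp add: lattice_pt_def)

lemma lattice_pt_minus: "lattice_pt x \<Longrightarrow> lattice_pt (- x)"
  by (simp add: lattice_pt_def)

lemma lattice_pt_diff: "lattice_pt x \<Longrightarrow> lattice_pt y \<Longrightarrow> lattice_pt (x - y)"
  by (simp add: lattice_pt_def)

lemma lattice_pt_scaleR: "k \<in> \<int> \<Longrightarrow> lattice_pt x \<Longrightarrow> lattice_pt (k *\<^sub>R x)"
  by (simp add: lattice_pt_def)

lemma lattice_pt_cross3: "lattice_pt a \<Longrightarrow> lattice_pt b \<Longrightarrow> lattice_pt (cross3 a b)"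
  unfolding lattice_pt_def cross3_def
  by (auto simp: forall_3 vector_3 intro!: Ints_diff Ints_mult)

lemma inner_lattice_pt_Ints: "lattice_pt x \<Longrightarrow> lattice_pt y \<Longrightarrow> x \<bullet> y \<in> \<int>"
  unfolding lattice_pt_def inner_vec_def by (auto intro!: Ints_sum Ints_mult)

lemma finite_lattice_pts:
  fixes B :: "(real^'n) set"
  assumes "bounded B"
  shows "finite {x \<in> B. lattice_pt x}"
proof -
  obtain r where r: "\<And>x. x \<in> B \<Longrightarrow> norm x \<le> r"
    using assms bounded_iff by blast
  define R where "R = \<lceil>r\<rceil>"
  have "{x \<in> B. lattice_pt x} \<subseteq> (\<lambda>f. \<chi> i. of_int (f i)) ` (UNIV \<rightarrow>\<^sub>E {-R..R})"
  proof
    fix x assume x: "x \<in> {x \<in> B. lattice_pt x}"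
    have "x = (\<chi> i. of_int \<lfloor>x $ i\<rfloor>)"
      using x by (auto simp: vec_eq_iff lattice_pt_def elim: Ints_cases)
    moreover have "\<bar>x $ i\<bar> \<le> of_int R" for i
    proof -
      have "\<bar>x $ i\<bar> \<le> r"
        using r x component_le_norm_cart[of x i] by force
      also have "r \<le> of_int R"
        unfolding R_def by (rule le_of_int_ceiling)
      finally show ?thesis .
    qed
    then have "-R \<le> \<lfloor>x $ i\<rfloor> \<and> \<lfloor>x $ i\<rfloor> \<le> R" for i
      by (metis abs_le_iff floor_mono floor_of_int minus_le_iff of_int_minus)
    then have "(\<lambda>i. \<lfloor>x $ i\<rfloor>) \<in> UNIV \<rightarrow>\<^sub>E {-R..R}"
      by auto
    ultimately show "x \<in> (\<lambda>f. \<chi> i. of_int (f i)) ` (UNIV \<rightarrow>\<^sub>E {-R..R})"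
      by (rule image_eqI)
  qed
  then show ?thesis
    by (rule finite_subset) (simp add: finite_PiE)
qed

lemma Ints_det:
  fixes A :: "real^'n^'n"
  assumes "\<And>i j. A $ i $ j \<in> \<int>"
  shows "det A \<in> \<int>"
  unfolding det_def using assms by (intro Ints_sum Ints_mult Ints_prod) auto

lemma abs_det_eq_1_if_lattice_surjective:
  fixes M :: "real^'n^'n"
  assumes integral: "\<And>i j. M $ i $ j \<in> \<int>"
    and surj: "\<And>x. lattice_pt x \<Longrightarrow> \<exists>z. lattice_pt z \<and> M *v z = x"
  shows "\<bar>det M\<bar> = 1"
proof -
  have "\<forall>k. \<exists>z. lattice_pt z \<and> M *v z = axis k 1"
    using surj by (simp add: lattice_pt_def axis_def)
  then obtain Z where Z: "\<And>k. lattice_pt (Z k) \<and> M *v Z k = axis k 1"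
    by metis
  define N :: "real^'n^'n" where "N = (\<chi> i k. Z k $ i)"
  have "M ** N = mat 1"
  proof -
    have "(M ** N) $ i $ k = (M *v Z k) $ i" for i k
      by (simp add: matrix_matrix_mult_def matrix_vector_mult_def N_def)
    then show ?thesis
      using Z by (simp add: vec_eq_iff mat_def axis_def)
  qed
  then have "det M * det N = 1"
    by (simp flip: det_mul)
  moreover have "det N \<in> \<int>"
    using Z by (intro Ints_det) (simp add: N_def lattice_pt_def)
  moreover have "det M \<in> \<int>"
    using integral by (rule Ints_det)
  ultimately obtain i j :: int where "i * j = 1" "det M = of_int i"
    by (elim Ints_cases) (metis of_int_eq_1_iff of_int_mult)
  then show ?thesis
    using zmult_eq_1_iff by force
qed

lemma cross3_decomposition:
  fixes a b x :: "real^3"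
  defines "n \<equiv> cross3 a b"
  shows "(n \<bullet> n) *\<^sub>R x = (cross3 x b \<bullet> n) *\<^sub>R a + (cross3 a x \<bullet> n) *\<^sub>R b + (n \<bullet> x) *\<^sub>R n"
  unfolding n_def cross3_def inner_vec_def
  by (simp add: vec_eq_iff forall_3 sum_3 vector_3; simp add: algebra_simps)

lemma cross3_orthogonal_imp_combination:
  fixes a b x :: "real^3"
  assumes "cross3 a b \<noteq> 0" and "cross3 a b \<bullet> x = 0"
  shows "\<exists>\<alpha> \<beta>. x = \<alpha> *\<^sub>R a + \<beta> *\<^sub>R b"
proof -
  let ?n = "cross3 a b"
  have "x = (1 / (?n \<bullet> ?n)) *\<^sub>R ((?n \<bullet> ?n) *\<^sub>R x)"
    using assms(1) by simp
  also have "(?n \<bullet> ?n) *\<^sub>R x = (cross3 x b \<bullet> ?n) *\<^sub>R a + (cross3 a x \<bullet> ?n) *\<^sub>R b"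
    using cross3_decomposition[of a b x] assms(2) by simp
  finally have "x = ((cross3 x b \<bullet> ?n) / (?n \<bullet> ?n)) *\<^sub>R a + ((cross3 a x \<bullet> ?n) / (?n \<bullet> ?n)) *\<^sub>R b"
    by (simp add: scaleR_add_right)
  then show ?thesis by blast
qed

lemma span_eq_UNIV_cross3_transversal:
  fixes a b u :: "real^3"
  assumes "cross3 a b \<noteq> 0" and "cross3 a b \<bullet> u \<noteq> 0" and "{a, b, u} \<subseteq> S"
  shows "span S = UNIV"
proof -
  let ?n = "cross3 a b"
  have ab: "a \<in> span S" "b \<in> span S" and "u \<in> span S"
    using assms(3) span_base by auto
  then have "(?n \<bullet> ?n) *\<^sub>R u - (cross3 u b \<bullet> ?n) *\<^sub>R a - (cross3 a u \<bullet> ?n) *\<^sub>R b \<in> span S"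
    by (intro span_diff span_scale)
  then have "(?n \<bullet> u) *\<^sub>R ?n \<in> span S"
    using cross3_decomposition[of a b u] by (simp add: algebra_simps)
  then have n: "?n \<in> span S"
    using assms(2) span_scale[of "(?n \<bullet> u) *\<^sub>R ?n" S "1 / (?n \<bullet> u)"] by simp
  have "x \<in> span S" for x
  proof -
    have "(?n \<bullet> ?n) *\<^sub>R x \<in> span S"
      unfolding cross3_decomposition using ab n by (intro span_add span_scale)
    then show ?thesis
      using assms(1) span_scale[of "(?n \<bullet> ?n) *\<^sub>R x" S "1 / (?n \<bullet> ?n)"] by simp
  qed
  then show ?thesis by auto
qed

lemma zero_in_interior_convex_hull:
  fixes y :: "'i \<Rightarrow> 'a::euclidean_space"
  assumes "finite I" and w: "\<And>i. i \<in> I \<Longrightarrow> w i > 0"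
    and balanced: "(\<Sum>i\<in>I. w i *\<^sub>R y i) = 0" and spanning: "span (y ` I) = UNIV"
  shows "0 \<in> interior (convex hull (y ` I))"
proof -
  define W where "W x = (\<Sum>i\<in>{i\<in>I. y i = x}. w i)" for x
  have W_pos: "W x > 0" if "x \<in> y ` I" for x
    unfolding W_def using that \<open>finite I\<close> w by (intro sum_pos) auto
  have "(\<Sum>i\<in>I. w i *\<^sub>R y i) = (\<Sum>x\<in>y ` I. \<Sum>i\<in>{i\<in>I. y i = x}. w i *\<^sub>R y i)"
    by (rule sum.image_gen[OF \<open>finite I\<close>])
  also have "\<dots> = (\<Sum>x\<in>y ` I. W x *\<^sub>R x)"
    unfolding W_def by (intro sum.cong refl) (simp add: scaleR_sum_left)
  finally have W_balanced: "(\<Sum>x\<in>y ` I. W x *\<^sub>R x) = 0"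
    using balanced by simp
  define t where "t = (\<Sum>x\<in>y ` I. W x)"
  have "I \<noteq> {}"
    using spanning by auto
  then have "t > 0"
    unfolding t_def using \<open>finite I\<close> W_pos by (intro sum_pos) auto
  have "0 \<in> {z. \<exists>u. (\<forall>x\<in>y ` I. 0 < u x) \<and> sum u (y ` I) = 1 \<and> (\<Sum>x\<in>y ` I. u x *\<^sub>R x) = z}"
  proof (intro CollectI exI[of _ "\<lambda>x. W x / t"] conjI ballI)
    show "0 < W x / t" if "x \<in> y ` I" for x
      using W_pos[OF that] \<open>t > 0\<close> by simp
    show "(\<Sum>x\<in>y ` I. W x / t) = 1"
      using \<open>t > 0\<close> by (simp add: t_def flip: sum_divide_distrib)
    show "(\<Sum>x\<in>y ` I. (W x / t) *\<^sub>R x) = 0"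
      using W_balanced by (simp add: divide_inverse scaleR_sum_right[symmetric] mult.commute
          flip: scaleR_scaleR)
  qed
  then have rel: "0 \<in> rel_interior (convex hull (y ` I))"
    using explicit_subset_rel_interior_convex_hull_minimal \<open>finite I\<close> by blast
  then have "0 \<in> affine hull (y ` I)"
    using convex_hull_subset_affine_hull rel_interior_subset by blast
  then have "affine hull (convex hull (y ` I)) = UNIV"
    using affine_hull_span_0 spanning by (metis affine_hull_convex_hull)
  then show ?thesis
    using rel rel_interior_interior by blast
qed

text \<open>A positive combination of \<open>u\<close> and \<open>v\<close> lies in the plane of the triangle; adding a large
  multiple of \<open>a + b + (-a-b) = 0\<close> makes all weights positive.\<close>

lemma zero_in_interior_bipyramid:
  fixes a b u v :: "real^3"
  assumes n: "cross3 a b \<noteq> 0" and opposite: "(cross3 a b \<bullet> u) * (cross3 a b \<bullet> v) < 0"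
  shows "0 \<in> interior (convex hull {a, b, -a-b, u, v})"
proof -
  let ?n = "cross3 a b"
  have pos_neg: "0 \<in> interior (convex hull {a, b, -a-b, u, v})"
    if u_pos: "?n \<bullet> u > 0" and v_neg: "?n \<bullet> v < 0" for u v
  proof -
    define s where "s = ?n \<bullet> u"
    define t where "t = - (?n \<bullet> v)"
    have "s > 0" "t > 0"
      using u_pos v_neg by (auto simp: s_def t_def)
    have "?n \<bullet> (t *\<^sub>R u + s *\<^sub>R v) = 0"
      by (simp add: inner_add_right inner_diff_right s_def t_def)
    then obtain \<alpha> \<beta> where \<alpha>\<beta>: "t *\<^sub>R u + s *\<^sub>R v = \<alpha> *\<^sub>R a + \<beta> *\<^sub>R b"
      using cross3_orthogonal_imp_combination[OF n] by blast
    define K where "K = \<bar>\<alpha>\<bar> + \<bar>\<beta>\<bar> + 1"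
    define y where "y = (!) [a, b, -a-b, u, v]"
    define w where "w = (!) [K - \<alpha>, K - \<beta>, K, t, s]"
    have I: "{..<5::nat} = {0, 1, 2, 3, 4}"
      by auto
    have img: "y ` {..<5} = {a, b, -a-b, u, v}"
      by (simp add: I y_def)
    have "0 \<in> interior (convex hull (y ` {..<5}))"
    proof (rule zero_in_interior_convex_hull)
      show "w i > 0" if "i \<in> {..<5}" for i
        using that \<open>s > 0\<close> \<open>t > 0\<close> by (auto simp: I w_def K_def)
      have "(\<Sum>i<5. w i *\<^sub>R y i) = (t *\<^sub>R u + s *\<^sub>R v) - (\<alpha> *\<^sub>R a + \<beta> *\<^sub>R b)"
        by (simp add: I w_def y_def algebra_simps)
      then show "(\<Sum>i<5. w i *\<^sub>R y i) = 0"
        using \<alpha>\<beta> by simp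
      show "span (y ` {..<5}) = UNIV"
        unfolding img using n u_pos by (intro span_eq_UNIV_cross3_transversal[of a b u]) auto
    qed simp
    then show ?thesis
      using img by simp
  qed
  show ?thesis
  proof (cases "?n \<bullet> u > 0")
    case True
    then show ?thesis
      using pos_neg opposite by (simp add: mult_less_0_iff)
  next
    case False
    then have "0 \<in> interior (convex hull {a, b, -a-b, v, u})"
      using pos_neg opposite by (simp add: mult_less_0_iff)
    moreover have "{a, b, -a-b, v, u} = {a, b, -a-b, u, v}"
      by auto
    ultimately show ?thesis
      by simp
  qed
qed

lemma minimal_fano_imp_fano: "minimal_fano P \<Longrightarrow> fano_polytope P"
  unfolding minimal_fano_def by blast

lemma minimal_fano_imp_polytope: "minimal_fano P \<Longrightarrow> polytope P"
  using minimal_fano_imp_fano by (simp add: fano_polytope_def)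

lemma minimal_fano_extreme_point_lattice_pt:
  assumes "minimal_fano P" and "v extreme_point_of P"
  shows "v \<in> {x \<in> P. lattice_pt x}"
proof -
  have "lattice_pt v"
    using minimal_fano_imp_fano[OF assms(1)] assms(2) by (simp add: fano_polytope_def)
  moreover have "v \<in> P"
    using assms(2) by (simp add: extreme_point_of_def)
  ultimately show ?thesis
    by simp
qed

text \<open>Otherwise the hull of the lattice points of \<open>P\<close> other than \<open>\<rho>\<close> would be a Fano polytope:
  it contains \<open>S\<close>, hence the origin in its interior, and its interior lattice points are
  interior lattice points of \<open>P\<close>.\<close>

lemma minimal_fano_extreme_point_mem:
  assumes minimal: "minimal_fano P" and \<rho>: "\<rho> extreme_point_of P"
    and S: "S \<subseteq> {x \<in> P. lattice_pt x}" and zero: "0 \<in> interior (convex hull S)"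
  shows "\<rho> \<in> S"
proof (rule ccontr)
  assume "\<rho> \<notin> S"
  have "polytope P"
    using minimal by (rule minimal_fano_imp_polytope)
  have interior_P: "{x \<in> interior P. lattice_pt x} = {0}"
    using minimal_fano_imp_fano[OF minimal] unfolding fano_polytope_def by blast
  let ?L = "{x \<in> P. lattice_pt x} - {\<rho>}"
  let ?H = "convex hull ?L"
  have "finite ?L"
    using finite_lattice_pts[OF polytope_imp_bounded[OF \<open>polytope P\<close>]] by auto
  have "?H \<subseteq> P"
    using polytope_imp_convex[OF \<open>polytope P\<close>] by (intro hull_minimal) auto
  have "S \<subseteq> ?L"
    using S \<open>\<rho> \<notin> S\<close> by auto
  then have "0 \<in> interior ?H"
    using zero interior_mono hull_mono[OF \<open>S \<subseteq> ?L\<close>] by blast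
  have "fano_polytope ?H"
    unfolding fano_polytope_def
  proof (intro conjI allI impI)
    show "polytope ?H"
      using \<open>finite ?L\<close> by (rule polytope_convex_hull)
    show "aff_dim ?H = 3"
      using aff_dim_nonempty_interior[of ?H] \<open>0 \<in> interior ?H\<close> by auto
    show "lattice_pt v" if "v extreme_point_of ?H" for v
      using extreme_point_of_convex_hull[OF that] by auto
    show "{x \<in> interior ?H. lattice_pt x} = {0}"
      using interior_mono[OF \<open>?H \<subseteq> P\<close>] interior_P \<open>0 \<in> interior ?H\<close> by auto
  qed
  then show False
    using minimal \<rho> unfolding minimal_fano_def by blast
qed

lemma minimal_fano_extreme_point_bipyramid:
  assumes "minimal_fano P" and "\<rho> extreme_point_of P" and "cross3 a b \<noteq> 0"
    and "{a, b, -a-b, u, v} \<subseteq> {x \<in> P. lattice_pt x}"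
    and "(cross3 a b \<bullet> u) * (cross3 a b \<bullet> v) < 0"
  shows "\<rho> \<in> {a, b, -a-b, u, v}"
  using assms minimal_fano_extreme_point_mem zero_in_interior_bipyramid by blast

definition lattice_plane_basis :: "real^3 \<Rightarrow> real^3 \<Rightarrow> bool" where
  "lattice_plane_basis a b \<longleftrightarrow> lattice_pt a \<and> lattice_pt b \<and> cross3 a b \<noteq> 0 \<and>
     (\<forall>x. lattice_pt x \<longrightarrow> cross3 a b \<bullet> x = 0 \<longrightarrow> (\<exists>i\<in>\<int>. \<exists>j\<in>\<int>. x = i *\<^sub>R a + j *\<^sub>R b))"

lemma lattice_plane_basis_cross3_nonzero: "lattice_plane_basis a b \<Longrightarrow> cross3 a b \<noteq> 0"
  by (simp add: lattice_plane_basis_def)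

lemma cross3_rotate: "cross3 b (-a-b) = cross3 a b"
  by (simp add: cross3_simps)

lemma lattice_plane_basis_rotate:
  assumes "lattice_plane_basis a b"
  shows "lattice_plane_basis b (-a-b)"
  unfolding lattice_plane_basis_def cross3_rotate
proof (intro conjI allI impI)
  show "lattice_pt b" "lattice_pt (-a-b)" "cross3 a b \<noteq> 0"
    using assms by (auto simp: lattice_plane_basis_def intro: lattice_pt_diff lattice_pt_minus)
  fix x assume "lattice_pt x" "cross3 a b \<bullet> x = 0"
  then obtain i j where "i \<in> \<int>" "j \<in> \<int>" "x = i *\<^sub>R a + j *\<^sub>R b"
    using assms by (auto simp: lattice_plane_basis_def)
  then show "\<exists>i\<in>\<int>. \<exists>j\<in>\<int>. x = i *\<^sub>R b + j *\<^sub>R (-a-b)"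
    by (intro bexI[of _ "j - i"] bexI[of _ "-i"]) (auto simp: algebra_simps)
qed

lemma cross3_nonzero_imp_distinct:
  assumes "cross3 p q \<noteq> 0"
  shows "p \<noteq> q" "p \<noteq> -p-q" "q \<noteq> -p-q"
proof -
  have "cross3 p (-p-q) = - cross3 p q" "cross3 (-p-q) q = - cross3 p q"
    by (simp_all add: cross3_simps)
  then show "p \<noteq> q" "p \<noteq> -p-q" "q \<noteq> -p-q"
    using assms by (metis cross_refl neg_equal_0_iff_equal)+
qed

lemma cross3_transversal_if_planes_distinct:
  assumes "cross3 p q \<noteq> 0"
    and "subspace L1" "subspace L2" "dim L1 = dim L2" "L1 \<noteq> L2"
    and L1: "L1 = {x. cross3 a b \<bullet> x = 0}" and L2: "L2 = {x. cross3 p q \<bullet> x = 0}"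
  shows "cross3 a b \<bullet> p \<noteq> 0 \<or> cross3 a b \<bullet> q \<noteq> 0"
proof (rule ccontr)
  assume "\<not> ?thesis"
  then have orthogonal: "cross3 a b \<bullet> p = 0" "cross3 a b \<bullet> q = 0"
    by simp_all
  have "L2 \<subseteq> L1"
  proof
    fix x assume "x \<in> L2"
    then obtain \<alpha> \<beta> where "x = \<alpha> *\<^sub>R p + \<beta> *\<^sub>R q"
      unfolding L2 using cross3_orthogonal_imp_combination[OF assms(1)] by blast
    then show "x \<in> L1"
      unfolding L1 using orthogonal by (simp add: inner_add_right)
  qed
  then show False
    using subspace_dim_equal[of L2 L1] assms(2-5) by auto
qed

lemma std_triangle_in_imp_lattice_plane_basis:
  assumes "std_triangle_in T L"
  obtains a b where "lattice_plane_basis a b" and "L = {x. cross3 a b \<bullet> x = 0}"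
    and "\<And>v. v extreme_point_of T \<longleftrightarrow> v \<in> {a, b, -a-b}"
proof -
  obtain f :: "real^2 \<Rightarrow> real^3" where f: "linear f" "inj f" "range f = L"
    "f ` {y. lattice_pt y} = {x \<in> L. lattice_pt x}" "f ` std_triangle = T"
    using assms unfolding std_triangle_in_def by blast
  define a where "a = f (vector [1, 0])"
  define b where "b = f (vector [0, 1])"
  have f_eq: "f y = y $ 1 *\<^sub>R a + y $ 2 *\<^sub>R b" for y
  proof -
    have "y = y $ 1 *\<^sub>R vector [1, 0] + y $ 2 *\<^sub>R vector [0, 1]"
      by (simp add: vec_eq_iff forall_2)
    then have "f y = f (y $ 1 *\<^sub>R vector [1, 0] + y $ 2 *\<^sub>R vector [0, 1])"
      by (rule arg_cong)
    then show ?thesis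
      using f(1) by (simp add: a_def b_def linear_add linear_scale)
  qed
  have "lattice_pt (vector [1, 0] :: real^2)" "lattice_pt (vector [0, 1] :: real^2)"
    by (simp_all add: lattice_pt_def forall_2)
  then have lattice: "lattice_pt a" "lattice_pt b"
    using f(4) unfolding a_def b_def by blast+
  have n: "cross3 a b \<noteq> 0"
  proof
    assume "cross3 a b = 0"
    then have "a = 0 \<or> b = 0 \<or> (\<exists>c. b = c *\<^sub>R a)"
      using cross_eq_0 collinear_lemma by blast
    then obtain y :: "real^2" where "y \<noteq> 0" "f y = 0"
    proof (elim disjE exE)
      assume "a = 0"
      then show thesis
        using that[of "vector [1, 0]"] by (simp add: a_def vec_eq_iff forall_2)
    next
      assume "b = 0"
      then show thesis
        using that[of "vector [0, 1]"] by (simp add: b_def vec_eq_iff forall_2)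
    next
      fix c assume "b = c *\<^sub>R a"
      then show thesis
        using that[of "vector [-c, 1]"] by (simp add: f_eq vec_eq_iff forall_2)
    qed
    then show False
      using f(1,2) linear_injective_0 by blast
  qed
  have L: "L = {x. cross3 a b \<bullet> x = 0}"
  proof
    show "L \<subseteq> {x. cross3 a b \<bullet> x = 0}"
      using f(3) by (auto simp: f_eq inner_add_right dot_cross_self)
    show "{x. cross3 a b \<bullet> x = 0} \<subseteq> L"
    proof
      fix x assume "x \<in> {x. cross3 a b \<bullet> x = 0}"
      then obtain \<alpha> \<beta> where "x = \<alpha> *\<^sub>R a + \<beta> *\<^sub>R b"
        using cross3_orthogonal_imp_combination[OF n] by blast
      then have "x = f (vector [\<alpha>, \<beta>])"
        by (simp add: f_eq)
      then show "x \<in> L"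
        using f(3) by blast
    qed
  qed
  have "\<exists>i\<in>\<int>. \<exists>j\<in>\<int>. x = i *\<^sub>R a + j *\<^sub>R b" if "lattice_pt x" "cross3 a b \<bullet> x = 0" for x
  proof -
    have "x \<in> f ` {y. lattice_pt y}"
      using f(4) L that by auto
    then obtain z where "lattice_pt z" "x = f z"
      by auto
    then show ?thesis
      by (auto simp: f_eq lattice_pt_def)
  qed
  then have "lattice_plane_basis a b"
    using lattice n by (simp add: lattice_plane_basis_def)
  moreover have "T = convex hull {a, b, -a-b}"
  proof -
    have "f ` {vector [1, 0], vector [0, 1], vector [-1, -1]} = {a, b, -a-b}"
      by (simp add: f_eq)
    then show ?thesis
      using f(5) convex_hull_linear_image[OF f(1)] unfolding std_triangle_def by metis
  qed
  moreover have "\<not> affine_dependent {a, b, -a-b}"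
  proof -
    have "cross3 (a - b) (-a-b - b) = - 3 *\<^sub>R cross3 a b"
      unfolding cross3_def by (simp add: vec_eq_iff forall_3 vector_3; simp add: algebra_simps)
    have "\<not> collinear {a, b, -a-b}"
    proof
      assume "collinear {a, b, -a-b}"
      then have "collinear {0, a - b, -a-b - b}"
        by (subst (asm) collinear_3) auto
      then have "cross3 (a - b) (-a-b - b) = 0"
        by (simp add: cross_eq_0)
      then show False
        using n \<open>cross3 (a - b) (-a-b - b) = - 3 *\<^sub>R cross3 a b\<close> by simp
    qed
    then show ?thesis
      using collinear_3_eq_affine_dependent by blast
  qed
  ultimately show thesis
    using that L extreme_point_of_convex_hull_affine_independent by blast
qed

definition dilated_std_triangle :: "int \<Rightarrow> (int \<times> int) set" where
  "dilated_std_triangle r = {(i, j). i + j \<le> r \<and> i - 2 * j \<le> r \<and> j - 2 * i \<le> r}"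

text \<open>The square \<open>[0, m)\<^sup>2\<close> is cut by the line \<open>i + j = m - 1\<close> into two pieces, one inside
  \<open>(m - 1) \<cdot> std_triangle\<close> and one whose point reflection through \<open>(m - 1)/2 \<cdot> (1, 1)\<close> is.\<close>

lemma dilated_std_triangle_residues:
  fixes i j m :: int
  assumes "m > 0"
  shows "\<exists>k l. (i + k * m, j + l * m) \<in> dilated_std_triangle (m - 1)
    \<or> (k * m - 1 - i, l * m - 1 - j) \<in> dilated_std_triangle (m - 1)"
proof -
  have bounds: "0 \<le> i mod m" "i mod m < m" "0 \<le> j mod m" "j mod m < m"
    using assms by simp_all
  have "i + (- (i div m)) * m = i mod m" "j + (- (j div m)) * m = j mod m"
    by (simp_all add: minus_div_mult_eq_mod[symmetric])
  moreover have "(i div m + 1) * m - 1 - i = m - 1 - i mod m"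
    "(j div m + 1) * m - 1 - j = m - 1 - j mod m"
    by (simp_all add: algebra_simps minus_div_mult_eq_mod[symmetric])
  moreover have "(i', j') \<in> dilated_std_triangle (m - 1)
    \<or> (m - 1 - i', m - 1 - j') \<in> dilated_std_triangle (m - 1)"
    if "0 \<le> i'" "i' < m" "0 \<le> j'" "j' < m" for i' j'
    using that unfolding dilated_std_triangle_def by auto
  ultimately show ?thesis
    using bounds by metis
qed

lemma std_triangle_coords_in_convex_hull:
  fixes a b :: "'a::real_vector"
  assumes "\<alpha> + \<beta> \<le> 1" "\<alpha> - 2 * \<beta> \<le> 1" "\<beta> - 2 * \<alpha> \<le> 1"
  shows "\<alpha> *\<^sub>R a + \<beta> *\<^sub>R b \<in> convex hull {a, b, -a-b}"
proof -
  let ?u = "(1 + 2 * \<alpha> - \<beta>) / 3" and ?v = "(1 + 2 * \<beta> - \<alpha>) / 3" and ?w = "(1 - \<alpha> - \<beta>) / 3"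
  have "?u *\<^sub>R a + ?v *\<^sub>R b + ?w *\<^sub>R (-a-b) = (?u - ?w) *\<^sub>R a + (?v - ?w) *\<^sub>R b"
    by (simp add: algebra_simps)
  also have "\<dots> = \<alpha> *\<^sub>R a + \<beta> *\<^sub>R b"
    by (simp add: field_simps)
  moreover have "?u \<ge> 0" "?v \<ge> 0" "?w \<ge> 0" "?u + ?v + ?w = 1"
    using assms by (simp_all add: field_simps)
  ultimately show ?thesis
    unfolding convex_hull_3 by (smt (verit) mem_Collect_eq)
qed

lemma dilated_std_triangle_point_in_convex:
  fixes a b z :: "'a::real_vector"
  assumes "m \<ge> 2" and "(i, j) \<in> dilated_std_triangle (m - 1)"
    and "convex K" and "{a, b, -a-b, z} \<subseteq> K"
  shows "(of_int i / of_int m) *\<^sub>R a + (of_int j / of_int m) *\<^sub>R b + (1 / of_int m) *\<^sub>R z \<in> K"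
proof -
  define r where "r = real_of_int (m - 1)"
  have "r > 0"
    using assms(1) by (simp add: r_def)
  have "of_int i + of_int j \<le> r" "of_int i - 2 * of_int j \<le> r" "of_int j - 2 * of_int i \<le> r"
    using assms(2) unfolding dilated_std_triangle_def r_def by (simp_all flip: of_int_le_iff)
  then have "(of_int i / r) *\<^sub>R a + (of_int j / r) *\<^sub>R b \<in> convex hull {a, b, -a-b}"
    using \<open>r > 0\<close> by (intro std_triangle_coords_in_convex_hull) (simp_all add: field_simps)
  also have "\<dots> \<subseteq> K"
    using assms(3,4) by (intro hull_minimal) auto
  finally have p: "(of_int i / r) *\<^sub>R a + (of_int j / r) *\<^sub>R b \<in> K" .
  have z: "z \<in> K"
    using assms(4) by simp
  have "(r / of_int m) *\<^sub>R ((of_int i / r) *\<^sub>R a + (of_int j / r) *\<^sub>R b)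
      + (1 / of_int m) *\<^sub>R z \<in> K"
    by (rule convexD[OF assms(3) p z]) (use assms(1) \<open>r > 0\<close> in \<open>auto simp: r_def field_simps\<close>)
  then show ?thesis
    using \<open>r > 0\<close> by (simp add: scaleR_add_right)
qed

locale minimal_fano_bipyramid =
  fixes P :: "(real^3) set" and a b d :: "real^3"
  assumes minimal: "minimal_fano P"
    and basis: "lattice_plane_basis a b"
    and extreme: "a extreme_point_of P" "b extreme_point_of P" "(-a-b) extreme_point_of P"
      "d extreme_point_of P" "(a+b-d) extreme_point_of P"
    and height_d: "cross3 a b \<bullet> d \<noteq> 0"
begin

abbreviation height :: "real^3 \<Rightarrow> real" where
  "height x \<equiv> cross3 a b \<bullet> x"

lemma cross3_nonzero: "cross3 a b \<noteq> 0"
  using basis by (rule lattice_plane_basis_cross3_nonzero)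

lemma vertices_lattice_pts: "{a, b, -a-b, d, a+b-d} \<subseteq> {x \<in> P. lattice_pt x}"
  using extreme minimal_fano_extreme_point_lattice_pt[OF minimal] by auto

lemma height_vertices [simp]:
  "height a = 0" "height b = 0" "height (-a-b) = 0" "height (a+b-d) = - height d"
  by (simp_all add: dot_cross_self inner_diff_right inner_add_right)

lemma height_Ints: "lattice_pt x \<Longrightarrow> height x \<in> \<int>"
  using basis by (auto simp: lattice_plane_basis_def intro: inner_lattice_pt_Ints lattice_pt_cross3)

lemma opposite_heights: "height d * height (a+b-d) < 0"
  using height_d by (auto simp: zero_less_mult_iff linorder_neq_iff)

lemma P_eq_convex_hull: "P = convex hull {a, b, -a-b, d, a+b-d}"
proof -
  have "polytope P"
    using minimal by (rule minimal_fano_imp_polytope)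
  have "{x. x extreme_point_of P} \<subseteq> {a, b, -a-b, d, a+b-d}"
    using minimal_fano_extreme_point_bipyramid[OF minimal _ cross3_nonzero vertices_lattice_pts
        opposite_heights] by blast
  moreover have "P = convex hull {x. x extreme_point_of P}"
    using Krein_Milman_Minkowski polytope_imp_compact polytope_imp_convex \<open>polytope P\<close> by blast
  ultimately have "P \<subseteq> convex hull {a, b, -a-b, d, a+b-d}"
    by (metis hull_mono)
  moreover have "convex hull {a, b, -a-b, d, a+b-d} \<subseteq> P"
    using vertices_lattice_pts polytope_imp_convex[OF \<open>polytope P\<close>] by (intro hull_minimal) auto
  ultimately show ?thesis
    by blast
qed

text \<open>Otherwise the point \<open>X\<close> could replace \<open>d\<close> or \<open>a + b - d\<close> (whichever lies on the same
  side of the plane) in the bipyramid.\<close>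

lemma no_lattice_pt_of_smaller_height:
  assumes X: "lattice_pt X" "X \<in> P" and "0 < \<bar>height X\<bar>" "\<bar>height X\<bar> < \<bar>height d\<bar>"
  shows False
proof (cases "height X * height d > 0")
  case True
  then have "height X * height (a+b-d) < 0"
    by (simp add: mult_less_0_iff zero_less_mult_iff)
  then have "d \<in> {a, b, -a-b, X, a+b-d}"
    using vertices_lattice_pts X
    by (intro minimal_fano_extreme_point_bipyramid[OF minimal extreme(4) cross3_nonzero]) auto
  then have "height d \<in> height ` {a, b, -a-b, X, a+b-d}"
    by (rule imageI)
  then have "height d \<in> {0, height X, - height d}"
    by simp
  then show False
    using assms height_d by auto
next
  case False
  then have "height d * height X < 0"
    using assms by (simp add: mult_less_0_iff zero_less_mult_iff) linarith
  then have "a+b-d \<in> {a, b, -a-b, d, X}"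
    using vertices_lattice_pts X
    by (intro minimal_fano_extreme_point_bipyramid[OF minimal extreme(5) cross3_nonzero]) auto
  then have "height (a+b-d) \<in> height ` {a, b, -a-b, d, X}"
    by (rule imageI)
  then have "- height d \<in> {0, height d, height X}"
    by simp
  then show False
    using assms height_d by auto
qed

text \<open>\<open>P\<close> contains \<open>(m - 1)/m \<cdot> conv {a, b, -a-b} + 1/m \<cdot> e\<close> for both apexes \<open>e\<close>;
  modulo the lattice of the plane, \<open>x0\<close> lies in the first of these triangles or \<open>-x0\<close> in the
  second.\<close>

lemma lattice_pt_of_fractional_height:
  assumes x0: "lattice_pt x0" and "m \<ge> 2" and m_x0: "of_int m * height x0 = height d"
  obtains X where "lattice_pt X" "X \<in> P" "\<bar>height X\<bar> = \<bar>height d\<bar> / of_int m"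
proof -
  have "lattice_pt (of_int m *\<^sub>R x0 - d)"
    using x0 vertices_lattice_pts by (intro lattice_pt_diff lattice_pt_scaleR) auto
  moreover have "height (of_int m *\<^sub>R x0 - d) = 0"
    using m_x0 by (simp add: inner_diff_right)
  ultimately obtain i' j' where "i' \<in> \<int>" "j' \<in> \<int>" "of_int m *\<^sub>R x0 - d = i' *\<^sub>R a + j' *\<^sub>R b"
    using basis unfolding lattice_plane_basis_def by blast
  moreover obtain i j where "i' = of_int i" "j' = of_int j"
    using \<open>i' \<in> \<int>\<close> \<open>j' \<in> \<int>\<close> by (elim Ints_cases)
  ultimately have mx0: "of_int m *\<^sub>R x0 - d = of_int i *\<^sub>R a + of_int j *\<^sub>R b"
    by simp
  define \<mu> where "\<mu> = real_of_int m"
  have "\<mu> > 0"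
    using \<open>m \<ge> 2\<close> by (simp add: \<mu>_def)
  have "x0 = (1 / \<mu>) *\<^sub>R (\<mu> *\<^sub>R x0)"
    using \<open>\<mu> > 0\<close> by simp
  also have "\<mu> *\<^sub>R x0 = of_int i *\<^sub>R a + of_int j *\<^sub>R b + d"
    using mx0 by (simp add: \<mu>_def algebra_simps)
  finally have x0_eq: "x0 = (of_int i / \<mu>) *\<^sub>R a + (of_int j / \<mu>) *\<^sub>R b + (1 / \<mu>) *\<^sub>R d"
    by (simp add: scaleR_add_right)
  have height_x0: "height x0 = height d / \<mu>"
    using m_x0 \<open>\<mu> > 0\<close> by (simp add: \<mu>_def field_simps)
  have "convex P"
    using minimal minimal_fano_imp_polytope polytope_imp_convex by blast
  have ab: "lattice_pt a" "lattice_pt b"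
    using vertices_lattice_pts by auto
  have "m > 0"
    using \<open>m \<ge> 2\<close> by simp
  from dilated_std_triangle_residues[OF this, of i j] obtain k l
    where "(i + k * m, j + l * m) \<in> dilated_std_triangle (m - 1)
      \<or> (k * m - 1 - i, l * m - 1 - j) \<in> dilated_std_triangle (m - 1)"
    by blast
  then show thesis
  proof
    assume k_l: "(i + k * m, j + l * m) \<in> dilated_std_triangle (m - 1)"
    define X where "X = x0 + of_int k *\<^sub>R a + of_int l *\<^sub>R b"
    have "of_int (i + k * m) / \<mu> = of_int i / \<mu> + of_int k"
      "of_int (j + l * m) / \<mu> = of_int j / \<mu> + of_int l"
      using \<open>\<mu> > 0\<close> by (simp_all add: \<mu>_def field_simps)
    then have "X = (of_int (i + k * m) / \<mu>) *\<^sub>R a + (of_int (j + l * m) / \<mu>) *\<^sub>R b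
        + (1 / \<mu>) *\<^sub>R d"
      unfolding X_def x0_eq by (simp add: scaleR_add_left algebra_simps)
    also have "\<dots> \<in> P"
      unfolding \<mu>_def using \<open>m \<ge> 2\<close> k_l \<open>convex P\<close> vertices_lattice_pts
      by (intro dilated_std_triangle_point_in_convex) auto
    finally have "X \<in> P" .
    moreover have "lattice_pt X"
      unfolding X_def using x0 ab by (intro lattice_pt_add lattice_pt_scaleR) auto
    moreover have "height X = height d / \<mu>"
      unfolding X_def using height_x0 by (simp add: inner_add_right)
    ultimately show thesis
      using that \<open>\<mu> > 0\<close> by (simp add: \<mu>_def)
  next
    assume k_l: "(k * m - 1 - i, l * m - 1 - j) \<in> dilated_std_triangle (m - 1)"
    define X where "X = - x0 + of_int k *\<^sub>R a + of_int l *\<^sub>R b"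
    have coefficients: "of_int (k * m - 1 - i) / \<mu> = of_int k - 1 / \<mu> - of_int i / \<mu>"
      "of_int (l * m - 1 - j) / \<mu> = of_int l - 1 / \<mu> - of_int j / \<mu>"
      using \<open>\<mu> > 0\<close> by (simp_all add: \<mu>_def field_simps)
    have "X = (of_int (k * m - 1 - i) / \<mu>) *\<^sub>R a + (of_int (l * m - 1 - j) / \<mu>) *\<^sub>R b
        + (1 / \<mu>) *\<^sub>R (a+b-d)"
      unfolding coefficients X_def x0_eq by (simp add: scaleR_diff_left algebra_simps)
    also have "\<dots> \<in> P"
      unfolding \<mu>_def using \<open>m \<ge> 2\<close> k_l \<open>convex P\<close> vertices_lattice_pts
      by (intro dilated_std_triangle_point_in_convex) auto
    finally have "X \<in> P" .
    moreover have "lattice_pt X"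
      unfolding X_def using x0 ab by (intro lattice_pt_add lattice_pt_scaleR lattice_pt_minus) auto
    moreover have "height X = - height d / \<mu>"
      unfolding X_def using height_x0 by (simp add: inner_add_right inner_diff_right)
    ultimately show thesis
      using that \<open>\<mu> > 0\<close> by (simp add: \<mu>_def)
  qed
qed

lemma height_divisible:
  assumes x: "lattice_pt x"
  shows "height x / height d \<in> \<int>"
proof (rule ccontr)
  assume not_divisible: "height x / height d \<notin> \<int>"
  have "lattice_pt d"
    using vertices_lattice_pts by simp
  obtain k where k: "height x = of_int k"
    using height_Ints[OF x] by (elim Ints_cases)
  obtain kd where kd: "height d = of_int kd"
    using height_Ints[OF \<open>lattice_pt d\<close>] by (elim Ints_cases)
  define g where "g = gcd k kd"
  obtain s t where st: "s * k + t * kd = g"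
    unfolding g_def using bezout_int by blast
  obtain m where m: "kd = g * m"
    using gcd_dvd2[of k kd] unfolding g_def by (rule dvdE)
  have "kd \<noteq> 0"
    using height_d kd by simp
  have "\<bar>m\<bar> \<noteq> 1"
  proof
    assume "\<bar>m\<bar> = 1"
    then have "m = 1 \<or> m = -1"
      by linarith
    then have "kd dvd g"
      using m by auto
    moreover have "g dvd k"
      unfolding g_def by simp
    ultimately have "kd dvd k"
      by (rule dvd_trans)
    then show False
      using not_divisible k kd \<open>kd \<noteq> 0\<close> by (auto elim!: dvdE)
  qed
  then have "\<bar>m\<bar> \<ge> 2"
    using m \<open>kd \<noteq> 0\<close> by (cases "m = 0") auto
  define x0 where "x0 = of_int (sgn m) *\<^sub>R (of_int s *\<^sub>R x + of_int t *\<^sub>R d)"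
  have "lattice_pt x0"
    unfolding x0_def using x \<open>lattice_pt d\<close>
    by (intro lattice_pt_scaleR lattice_pt_add) auto
  moreover have "of_int \<bar>m\<bar> * height x0 = height d"
  proof -
    have "height (of_int s *\<^sub>R x + of_int t *\<^sub>R d) = of_int g"
      using k kd st by (simp add: inner_add_right) (metis of_int_add of_int_mult)
    then have "of_int \<bar>m\<bar> * height x0 = of_int (\<bar>m\<bar> * sgn m * g)"
      unfolding x0_def by simp
    also have "\<dots> = height d"
      using kd m by (simp add: abs_mult_sgn mult.commute)
    finally show ?thesis .
  qed
  ultimately obtain X where X: "lattice_pt X" "X \<in> P"
    and height_X: "\<bar>height X\<bar> = \<bar>height d\<bar> / of_int \<bar>m\<bar>"
    using lattice_pt_of_fractional_height \<open>\<bar>m\<bar> \<ge> 2\<close> by blast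
  have "0 < \<bar>height X\<bar>" "\<bar>height X\<bar> < \<bar>height d\<bar>"
    unfolding height_X using height_d \<open>\<bar>m\<bar> \<ge> 2\<close> by (simp_all add: field_simps)
  then show False
    using no_lattice_pt_of_smaller_height X by blast
qed

lemma lattice_pt_imp_combination:
  assumes "lattice_pt x"
  shows "\<exists>i\<in>\<int>. \<exists>j\<in>\<int>. \<exists>k\<in>\<int>. x = i *\<^sub>R a + j *\<^sub>R b + k *\<^sub>R d"
proof -
  define k where "k = height x / height d"
  have "k \<in> \<int>"
    unfolding k_def using height_divisible[OF assms] .
  then have "lattice_pt (x - k *\<^sub>R d)"
    using assms vertices_lattice_pts by (intro lattice_pt_diff lattice_pt_scaleR) auto
  moreover have "height (x - k *\<^sub>R d) = 0"
    using height_d by (simp add: k_def inner_diff_right)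
  ultimately obtain i j where "i \<in> \<int>" "j \<in> \<int>" "x - k *\<^sub>R d = i *\<^sub>R a + j *\<^sub>R b"
    using basis by (auto simp: lattice_plane_basis_def)
  then show ?thesis
    using \<open>k \<in> \<int>\<close> by (metis diff_eq_eq)
qed

lemma ex_GL3Z_image_P_model: "\<exists>M. GL3Z M \<and> P = (\<lambda>x. M *v x) ` P_model"
proof -
  define M :: "real^3^3" where "M = (\<chi> i j. if j = 1 then a $ i else if j = 2 then b $ i else - d $ i)"
  have M_mult: "M *v x = x $ 1 *\<^sub>R a + x $ 2 *\<^sub>R b - x $ 3 *\<^sub>R d" for x
    by (simp add: vec_eq_iff M_def matrix_vector_mult_def sum_3 algebra_simps)
  have integral: "M $ i $ j \<in> \<int>" for i j
    using vertices_lattice_pts by (auto simp: M_def lattice_pt_def)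
  have "\<exists>z. lattice_pt z \<and> M *v z = x" if x: "lattice_pt x" for x
  proof -
    obtain i j k where "i \<in> \<int>" "j \<in> \<int>" "k \<in> \<int>" "x = i *\<^sub>R a + j *\<^sub>R b + k *\<^sub>R d"
      using lattice_pt_imp_combination[OF x] by blast
    then show ?thesis
      by (intro exI[of _ "vector [i, j, -k]"]) (simp add: lattice_pt_def forall_3 M_mult)
  qed
  then have "GL3Z M"
    unfolding GL3Z_def using integral abs_det_eq_1_if_lattice_surjective by blast
  have "(\<lambda>x. M *v x) ` P_model = convex hull ((\<lambda>x. M *v x) ` {vector [1, 0, 0], vector [0, 1, 0],
      vector [0, 0, -1], vector [-1, -1, 0], vector [1, 1, 1]})"
    unfolding P_model_def by (rule convex_hull_linear_image) (rule matrix_vector_mul_linear)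
  also have "(\<lambda>x. M *v x) ` {vector [1, 0, 0], vector [0, 1, 0], vector [0, 0, -1],
      vector [-1, -1, 0], vector [1, 1, 1]} = {a, b, -a-b, d, a+b-d}"
    by (simp add: M_mult insert_commute algebra_simps)
  finally show ?thesis
    using \<open>GL3Z M\<close> P_eq_convex_hull by auto
qed

end

lemma minimal_fano_bipyramid_if_apex:
  assumes "minimal_fano P" and basis: "lattice_plane_basis a b"
    and "a extreme_point_of P" "b extreme_point_of P" "(-a-b) extreme_point_of P"
    and w: "w \<in> {a, b, -a-b}" and "d extreme_point_of P" "(-w-d) extreme_point_of P"
    and "cross3 a b \<bullet> d \<noteq> 0"
  obtains a' b' where "minimal_fano_bipyramid P a' b' d"
proof -
  have rotated: "lattice_plane_basis b (-a-b)" "lattice_plane_basis (-a-b) a"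
    using lattice_plane_basis_rotate[OF basis] lattice_plane_basis_rotate[of b "-a-b"] by auto
  have cross: "cross3 b (-a-b) = cross3 a b" "cross3 (-a-b) a = cross3 a b"
    by (simp_all add: cross3_simps)
  from w consider "w = -a-b" | "w = a" | "w = b"
    by blast
  then show thesis
  proof cases
    case 1
    have "-w-d = a+b-d"
      unfolding 1 by (simp add: algebra_simps)
    then have "(a+b-d) extreme_point_of P"
      using assms(8) by simp
    then show thesis
      using assms by (intro that[of a b]) (simp add: minimal_fano_bipyramid_def)
  next
    case 2
    then show thesis
      using assms rotated cross
      by (intro that[of b "-a-b"]) (simp add: minimal_fano_bipyramid_def algebra_simps)
  next
    case 3
    then show thesis
      using assms rotated cross
      by (intro that[of "-a-b" a]) (simp add: minimal_fano_bipyramid_def algebra_simps)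
  qed
qed

text \<open>The heights of the vertices of the second triangle above the plane of the first sum to
  zero and are not all zero, so two of them have opposite signs; the third vertex then lies in
  the plane and, by minimality, is a vertex of the first triangle.\<close>

lemma second_triangle_apex:
  assumes minimal: "minimal_fano P" and n: "cross3 a b \<noteq> 0"
    and abc: "a extreme_point_of P" "b extreme_point_of P" "(-a-b) extreme_point_of P"
    and pq: "cross3 p q \<noteq> 0"
    and pqr: "p extreme_point_of P" "q extreme_point_of P" "(-p-q) extreme_point_of P"
    and transversal: "cross3 a b \<bullet> p \<noteq> 0 \<or> cross3 a b \<bullet> q \<noteq> 0"
  obtains w d where "w \<in> {a, b, -a-b}" "d extreme_point_of P" "(-w-d) extreme_point_of P"
    "cross3 a b \<bullet> d \<noteq> 0"
proof -
  let ?h = "\<lambda>x. cross3 a b \<bullet> x"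
  have "\<exists>u v w. (u, v, w) \<in> {(p, q, -p-q), (q, -p-q, p), (-p-q, p, q)} \<and> ?h u * ?h v < 0"
  proof (rule ccontr)
    assume "\<not> ?thesis"
    then have products: "?h p * ?h q \<ge> 0" "?h q * ?h (-p-q) \<ge> 0" "?h (-p-q) * ?h p \<ge> 0"
      by (auto simp: not_less)
    have "?h p * ?h p + ?h q * ?h q
        = - (?h q * ?h (-p-q) + ?h (-p-q) * ?h p) - 2 * (?h p * ?h q)"
      by (simp add: inner_diff_right algebra_simps)
    then have "?h p * ?h p + ?h q * ?h q \<le> 0"
      using products by linarith
    then have "?h p * ?h p = 0" "?h q * ?h q = 0"
      using zero_le_square[of "?h p"] zero_le_square[of "?h q"] by linarith+
    then show False
      using transversal by simp
  qed
  then obtain u v w where "(u, v, w) \<in> {(p, q, -p-q), (q, -p-q, p), (-p-q, p, q)}"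
    and opposite: "?h u * ?h v < 0"
    by blast
  then have "w \<notin> {u, v}" "-w-u = v"
    and uvw: "u extreme_point_of P" "v extreme_point_of P" "w extreme_point_of P"
    using cross3_nonzero_imp_distinct[OF pq] pqr by auto
  have "w \<in> {a, b, -a-b, u, v}"
    using abc uvw minimal_fano_extreme_point_lattice_pt[OF minimal]
    by (intro minimal_fano_extreme_point_bipyramid[OF minimal uvw(3) n _ opposite]) auto
  show thesis
  proof (rule that)
    show "w \<in> {a, b, -a-b}"
      using \<open>w \<in> {a, b, -a-b, u, v}\<close> \<open>w \<notin> {u, v}\<close> by blast
    show "u extreme_point_of P" "(-w-u) extreme_point_of P"
      using uvw \<open>-w-u = v\<close> by simp_all
    show "cross3 a b \<bullet> u \<noteq> 0"
      using opposite by auto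
  qed
qed

theorem lemma4p11:
  fixes P :: "(real^3) set"
  assumes "minimal_fano P"
    and "std_triangle_in T1 L1" and "std_triangle_in T2 L2" and "L1 \<noteq> L2"
    and "\<forall>v. v extreme_point_of T1 \<longrightarrow> v extreme_point_of P"
    and "\<forall>v. v extreme_point_of T2 \<longrightarrow> v extreme_point_of P"
  shows "\<exists>M. GL3Z M \<and> P = (\<lambda>x. M *v x) ` P_model"
proof -
  obtain a b where ab: "lattice_plane_basis a b" and L1: "L1 = {x. cross3 a b \<bullet> x = 0}"
    and T1: "\<And>v. v extreme_point_of T1 \<longleftrightarrow> v \<in> {a, b, -a-b}"
    using std_triangle_in_imp_lattice_plane_basis[OF assms(2)] by blast
  obtain p q where pq: "lattice_plane_basis p q" and L2: "L2 = {x. cross3 p q \<bullet> x = 0}"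
    and T2: "\<And>v. v extreme_point_of T2 \<longleftrightarrow> v \<in> {p, q, -p-q}"
    using std_triangle_in_imp_lattice_plane_basis[OF assms(3)] by blast
  have abc: "a extreme_point_of P" "b extreme_point_of P" "(-a-b) extreme_point_of P"
    and pqr: "p extreme_point_of P" "q extreme_point_of P" "(-p-q) extreme_point_of P"
    using T1 T2 assms(5,6) by auto
  have "cross3 a b \<bullet> p \<noteq> 0 \<or> cross3 a b \<bullet> q \<noteq> 0"
    using assms(2-4) L1 L2 lattice_plane_basis_cross3_nonzero[OF pq]
    unfolding std_triangle_in_def by (intro cross3_transversal_if_planes_distinct) auto
  then obtain w d where "w \<in> {a, b, -a-b}" "d extreme_point_of P" "(-w-d) extreme_point_of P"
      "cross3 a b \<bullet> d \<noteq> 0"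
    using second_triangle_apex[OF assms(1) _ abc _ pqr] lattice_plane_basis_cross3_nonzero ab pq
    by blast
  then obtain a' b' where "minimal_fano_bipyramid P a' b' d"
    using minimal_fano_bipyramid_if_apex[OF assms(1) ab abc] by blast
  then show ?thesis
    by (rule minimal_fano_bipyramid.ex_GL3Z_image_P_model)
qed

end
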